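(* Consider any sequences $\{(x_k,y_k,\gamma_k)\}_{k\ge0}$, $\{(\tilde x_k,u_k,\tilde\gamma_k)\}_{k\ge1}$ generated by the inexact symmetric proximal ADMM described in the context, and let $z_k=(x_k,y_k,\gamma_k)$ ($k\ge0$), $\tilde z_k=(\tilde x_k,y_k,\tilde\gamma_k)$ and $q_k=-\beta(A\tilde x_k+By_k-b)$ ($k\ge1$). Let $\sigma\in[\hat\sigma,1)$ be a scalar with $\varphi(\sigma)\ge0$, $\widehat\varphi(\sigma)\ge0$, $\widetilde\varphi(\sigma)>0$, $\overline\varphi(\sigma)\ge0$ (such $\sigma$ exists). Define $$\eta_0=\frac{4(1+\tau+\vartheta)\varphi(\sigma)}{(\tau+\theta)(1+\tau)\vartheta}d_0,\qquad \eta_k=\frac{\widetilde\varphi(\sigma)}{(\tau+\theta)\beta}\|q_k\|^2+\frac{\varphi(\sigma)}{(\tau+\theta)(1+\tau)}\|y_k-y_{k-1}\|_H^2\quad(k\ge1).$$ Then for every $k\ge1$, $$\|\tilde z_k-z_k\|_M^2+\eta_k\le\sigma\|\tilde z_k-z_{k-1}\|_M^2+\eta_{k-1}.$$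
   Context: Let $f:\mathbb{R}^n\to(-\infty,\infty]$ and $g:\mathbb{R}^p\to(-\infty,\infty]$ be proper closed convex functions, $A\in\mathbb{R}^{m\times n}$, $B\in\mathbb{R}^{m\times p}$, $b\in\mathbb{R}^m$ (problem: $\min\{f(x)+g(y):Ax+By=b\}$). Standing assumption: there exists $(x^*,y^*,\gamma^* )$ solving the Lagrangian system $0\in\partial f(x)-A^*\gamma$, $0\in\partial g(y)-B^*\gamma$, $0=Ax+By-b$. Here $\partial$ is the subdifferential, $A^*$ the transpose, $\mathbb{S}^n_{++}$ ($\mathbb{S}^p_+$) the symmetric positive definite (semidefinite) matrices, and $\|z\|_Q=\sqrt{\langle Qz,z\rangle}$ for $Q$ positive semidefinite. Algorithm (inexact symmetric proximal ADMM): given $(x_0,y_0,\gamma_0)\in\mathbb{R}^n\times\mathbb{R}^p\times\mathbb{R}^m$, $\beta>0$, $\tilde\sigma,\hat\sigma\in[0,1)$, $G\in\mathbb{S}^n_{++}$, $H\in\mathbb{S}^p_+$, and $(\tau,\theta)\in\mathcal R_{\tilde\sigma}:=\{(\tau,\theta):\tau\in(-1,1-\tilde\sigma),\ \tau+\theta>0,\ (1-\tau^2)(2-\tau-\theta-\tilde\sigma)-(1-\theta)^2(1-\tau-\tilde\sigma)>0\}$. For $k=1,2,\dots$: compute $(\tilde x_k,u_k)$ with $u_k\in\partial f(\tilde x_k)-A^*\tilde\gamma_k$ and $\|\tilde x_k-x_{k-1}+G^{-1}u_k\|_G^2\le\frac{\tilde\sigma}{\beta}\|\tilde\gamma_k-\gamma_{k-1}\|^2+\hat\sigma\|\tilde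 x_k-x_{k-1}\|_G^2$, where $\tilde\gamma_k=\gamma_{k-1}-\beta(A\tilde x_k+By_{k-1}-b)$; set $\gamma_{k-1/2}=\gamma_{k-1}-\tau\beta(A\tilde x_k+By_{k-1}-b)$; let $y_k$ be an optimal solution of $\min_y\{g(y)-\langle\gamma_{k-1/2},By\rangle+\frac\beta2\|A\tilde x_k+By-b\|^2+\frac12\|y-y_{k-1}\|_H^2\}$; set $x_k=x_{k-1}-G^{-1}u_k$ and $\gamma_k=\gamma_{k-1/2}-\theta\beta(A\tilde x_k+By_k-b)$. Definitions: $T(x,y,\gamma)=(\partial f(x)-A^*\gamma,\ \partial g(y)-B^*\gamma,\ Ax+By-b)$; $M=\begin{bmatrix}G&0&0\\0&H+\frac{(\tau-\tau\theta+\theta)\beta}{\tau+\theta}B^*B&-\frac{\tau}{\tau+\theta}B^*\\0&-\frac{\tau}{\tau+\theta}B&\frac{1}{(\tau+\theta)\beta}I\end{bmatrix}$; $d_0=\inf\{\|z^*-z_0\|_M^2: z^*\in T^{-1}(0)\}$; $\vartheta=\sqrt{(3-3\tau-2\tilde\sigma)(4-\tau-\theta-2\tilde\sigma)}-2(1-\tau-\tilde\sigma)$; and for $\sigma\in\mathbb{R}$: $\varphi(\sigma)=(1-\tau)(\sigma-1)+(1-\tau-\tilde\sigma)(\tau+\theta)$, $\widehat\varphi(\sigma)=(1-\tau)[(1+\theta)\sigma-1+\tau]-\tilde\sigma(\tau+\theta)$, $\widetilde\varphi(\sigma)=\sigma-(1-\tau-\theta)^2-\tilde\sigma(\tau+\theta)$,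 $\overline\varphi(\sigma)=[(1+\tau)\widehat\varphi(\sigma)-2\tau\varphi(\sigma)](1+\tau)\widetilde\varphi(\sigma)-(1-\theta)^2\varphi(\sigma)^2$. *)

theory Defs
  imports "HOL-Analysis.Analysis"
begin

text \<open>A function into (-inf, +inf] is modelled as an ereal-valued function that never takes -inf.\<close>

definition proper_fun :: "('a \<Rightarrow> ereal) \<Rightarrow> bool" where
  "proper_fun f \<longleftrightarrow> (\<forall>x. f x \<noteq> -\<infinity>) \<and> (\<exists>x. f x < \<infinity>)"

definition epigraph :: "('a \<Rightarrow> ereal) \<Rightarrow> ('a \<times> real) set" where
  "epigraph f = {(x, t). f x \<le> ereal t}"

definition convex_fun :: "('a::real_vector \<Rightarrow> ereal) \<Rightarrow> bool" where
  "convex_fun f \<longleftrightarrow> convex (epigraph f)"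

definition closed_fun :: "('a::topological_space \<Rightarrow> ereal) \<Rightarrow> bool" where
  "closed_fun f \<longleftrightarrow> closed (epigraph f)"

definition subdiff :: "('a::real_inner \<Rightarrow> ereal) \<Rightarrow> 'a \<Rightarrow> 'a set" where
  "subdiff f x = {u. f x < \<infinity> \<and> (\<forall>z. f z \<ge> f x + ereal (u \<bullet> (z - x)))}"

definition sym_pd :: "real^'n^'n \<Rightarrow> bool" where
  "sym_pd G \<longleftrightarrow> transpose G = G \<and> (\<forall>x. x \<noteq> 0 \<longrightarrow> x \<bullet> (G *v x) > 0)"

definition sym_psd :: "real^'n^'n \<Rightarrow> bool" where
  "sym_psd H \<longleftrightarrow> transpose H = H \<and> (\<forall>x. x \<bullet> (H *v x) \<ge> 0)"

definition qnorm2 :: "real^'n^'n \<Rightarrow> real^'n \<Rightarrow> real" where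
  "qnorm2 Q z = (Q *v z) \<bullet> z"

definition KKT_set ::
  "(real^'n \<Rightarrow> ereal) \<Rightarrow> (real^'p \<Rightarrow> ereal) \<Rightarrow> real^'n^'m \<Rightarrow> real^'p^'m \<Rightarrow> real^'m
   \<Rightarrow> ((real^'n) \<times> (real^'p) \<times> (real^'m)) set" where
  "KKT_set f g A B b = {(x, y, \<gamma>).
      transpose A *v \<gamma> \<in> subdiff f x \<and> transpose B *v \<gamma> \<in> subdiff g y \<and> A *v x + B *v y - b = 0}"

text \<open>The squared M-seminorm of (x,y,gamma), where M is the block matrix of the paper,
  written out as the quadratic form <M z, z>.\<close>
definition Mnorm2 ::
  "real^'n^'n \<Rightarrow> real^'p^'p \<Rightarrow> real^'p^'m \<Rightarrow> real \<Rightarrow> real \<Rightarrow> real \<Rightarrow>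
   real^'n \<Rightarrow> real^'p \<Rightarrow> real^'m \<Rightarrow> real" where
  "Mnorm2 G H B \<beta> \<tau> \<theta> x y \<gamma> =
     qnorm2 G x
     + qnorm2 (H + ((\<tau> - \<tau> * \<theta> + \<theta>) * \<beta> / (\<tau> + \<theta>)) *\<^sub>R (transpose B ** B)) y
     - 2 * (\<tau> / (\<tau> + \<theta>)) * ((B *v y) \<bullet> \<gamma>)
     + (1 / ((\<tau> + \<theta>) * \<beta>)) * (\<gamma> \<bullet> \<gamma>)"

definition d0 ::
  "(real^'n \<Rightarrow> ereal) \<Rightarrow> (real^'p \<Rightarrow> ereal) \<Rightarrow> real^'n^'m \<Rightarrow> real^'p^'m \<Rightarrow> real^'m \<Rightarrow>
   real^'n^'n \<Rightarrow> real^'p^'p \<Rightarrow> real \<Rightarrow> real \<Rightarrow> real \<Rightarrow>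
   real^'n \<Rightarrow> real^'p \<Rightarrow> real^'m \<Rightarrow> real" where
  "d0 f g A B b G H \<beta> \<tau> \<theta> x0 y0 \<gamma>0 =
     Inf ((\<lambda>(xs, ys, \<gamma>s). Mnorm2 G H B \<beta> \<tau> \<theta> (xs - x0) (ys - y0) (\<gamma>s - \<gamma>0)) ` KKT_set f g A B b)"

definition region_R :: "real \<Rightarrow> real \<Rightarrow> real \<Rightarrow> bool" where
  "region_R \<sigma>t \<tau> \<theta> \<longleftrightarrow> -1 < \<tau> \<and> \<tau> < 1 - \<sigma>t \<and> \<tau> + \<theta> > 0 \<and>
     (1 - \<tau>\<^sup>2) * (2 - \<tau> - \<theta> - \<sigma>t) - (1 - \<theta>)\<^sup>2 * (1 - \<tau> - \<sigma>t) > 0"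

definition vartheta :: "real \<Rightarrow> real \<Rightarrow> real \<Rightarrow> real" where
  "vartheta \<sigma>t \<tau> \<theta> = sqrt ((3 - 3 * \<tau> - 2 * \<sigma>t) * (4 - \<tau> - \<theta> - 2 * \<sigma>t)) - 2 * (1 - \<tau> - \<sigma>t)"

definition phi :: "real \<Rightarrow> real \<Rightarrow> real \<Rightarrow> real \<Rightarrow> real" where
  "phi \<sigma>t \<tau> \<theta> \<sigma> = (1 - \<tau>) * (\<sigma> - 1) + (1 - \<tau> - \<sigma>t) * (\<tau> + \<theta>)"

definition phi_hat :: "real \<Rightarrow> real \<Rightarrow> real \<Rightarrow> real \<Rightarrow> real" where
  "phi_hat \<sigma>t \<tau> \<theta> \<sigma> = (1 - \<tau>) * ((1 + \<theta>) * \<sigma> - 1 + \<tau>) - \<sigma>t * (\<tau> + \<theta>)"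

definition phi_tilde :: "real \<Rightarrow> real \<Rightarrow> real \<Rightarrow> real \<Rightarrow> real" where
  "phi_tilde \<sigma>t \<tau> \<theta> \<sigma> = \<sigma> - (1 - \<tau> - \<theta>)\<^sup>2 - \<sigma>t * (\<tau> + \<theta>)"

definition phi_bar :: "real \<Rightarrow> real \<Rightarrow> real \<Rightarrow> real \<Rightarrow> real" where
  "phi_bar \<sigma>t \<tau> \<theta> \<sigma> =
     ((1 + \<tau>) * phi_hat \<sigma>t \<tau> \<theta> \<sigma> - 2 * \<tau> * phi \<sigma>t \<tau> \<theta> \<sigma>) * (1 + \<tau>) * phi_tilde \<sigma>t \<tau> \<theta> \<sigma>
     - (1 - \<theta>)\<^sup>2 * (phi \<sigma>t \<tau> \<theta> \<sigma>)\<^sup>2"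

end

theory Submission
  imports Defs
begin

(* Write r_k = A xt_k + B y_k - b and w_k = B (y_k - y_(k-1)).  Expanding the M-seminorms and using
   the relative error criterion of the x-step gives
     sigma |zt_k - z_(k-1)|_M^2 - |zt_k - z_k|_M^2
       >= beta / (tau + theta) (phi_tilde |r_k|^2 - 2 phi <r_k, w_k> + phi_hat |w_k|^2)
          + sigma |y_k - y_(k-1)|_H^2,
   so everything hinges on the cross term <r_k, w_k>.  For k >= 2 it is controlled by monotonicity of
   the subdifferential of g at y_k and y_(k-1), where the optimality conditions of two consecutive
   y-subproblems apply, and phi_bar >= 0 makes the remaining quadratic form nonnegative.  For k = 1
   there is no earlier y-step; instead a Fejer-type inequality at an arbitrary KKT point z*, together
   with the choice of vartheta, bounds 2 (1 + tau) beta <r_1, w_1> + |y_1 - y_0|_H^2 by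
   4 (1 + tau + vartheta) / vartheta |z* - z_0|_M^2, hence by the same multiple of d_0. *)

section \<open>Quadratic forms\<close>

lemma transpose_mult_inner: "(transpose B *v v) \<bullet> y = v \<bullet> (B *v (y::real^'p))"
  by (simp add: dot_lmul_matrix)

lemma symmetric_mult_inner_commute:
  assumes "transpose H = H"
  shows "(H *v x) \<bullet> y = (H *v y) \<bullet> (x::real^'n)"
  using transpose_mult_inner[of H y x] assms by (simp add: inner_commute)

lemma qnorm2_zero [simp]: "qnorm2 H 0 = 0"
  unfolding qnorm2_def by simp

lemma qnorm2_scaleR: "qnorm2 H (c *\<^sub>R x) = c\<^sup>2 * qnorm2 H x"
  unfolding qnorm2_def by (simp add: matrix_vector_mult_scaleR power2_eq_square)

lemma qnorm2_add:
  assumes "transpose H = H"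
  shows "qnorm2 H (x + y) = qnorm2 H x + 2 * ((H *v x) \<bullet> y) + qnorm2 H y"
  unfolding qnorm2_def using symmetric_mult_inner_commute[OF assms, of y x]
  by (simp add: matrix_vector_right_distrib inner_add_left inner_add_right inner_commute)

lemma qnorm2_diff:
  assumes "transpose H = H"
  shows "qnorm2 H (x - y) = qnorm2 H x - 2 * ((H *v y) \<bullet> x) + qnorm2 H y"
  unfolding qnorm2_def using symmetric_mult_inner_commute[OF assms, of x y]
  by (simp add: matrix_vector_mult_diff_distrib inner_diff_left inner_diff_right inner_commute)

lemma qnorm2_four_point:
  assumes "transpose H = H"
  shows "qnorm2 H (a - c) - qnorm2 H (a - d) - qnorm2 H (e - c) + qnorm2 H (e - d)
           = 2 * ((H *v (c - d)) \<bullet> (e - a))"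
  unfolding qnorm2_def using symmetric_mult_inner_commute[OF assms]
  by (simp add: matrix_vector_mult_diff_distrib inner_diff_left inner_diff_right inner_commute)

lemma qnorm2_add_transpose_mult:
  "qnorm2 (H + c *\<^sub>R (transpose B ** B)) y = qnorm2 H y + c * ((B *v y) \<bullet> (B *v y))"
proof -
  have "((transpose B ** B) *v y) \<bullet> y = (B *v y) \<bullet> (B *v y)"
    by (simp only: matrix_vector_mul_assoc[symmetric] transpose_mult_inner)
  then show ?thesis
    unfolding qnorm2_def
    by (simp add: matrix_vector_mult_add_rdistrib scaleR_matrix_vector_assoc[symmetric] inner_add_left)
qed

lemma sym_psd_qnorm2_nonneg: "sym_psd H \<Longrightarrow> 0 \<le> qnorm2 H x"
  unfolding sym_psd_def qnorm2_def by (simp add: inner_commute)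

lemma sym_pd_imp_sym_psd: "sym_pd G \<Longrightarrow> sym_psd G"
  unfolding sym_pd_def sym_psd_def by (metis inner_zero_left less_eq_real_def)

lemma sym_pd_mult_matrix_inv:
  fixes G :: "real^'n^'n"
  assumes "sym_pd G"
  shows "G *v (matrix_inv G *v v) = v"
proof -
  have "inj ((*v) G)"
  proof (rule injI)
    fix x y
    assume "G *v x = G *v y"
    then have "(x - y) \<bullet> (G *v (x - y)) = 0"
      by (simp add: matrix_vector_mult_diff_distrib)
    then show "x = y"
      using assms unfolding sym_pd_def by (metis less_irrefl eq_iff_diff_eq_0)
  qed
  then have "invertible G"
    using matrix_left_invertible_injective invertible_left_inverse by blast
  then have "G ** matrix_inv G = mat 1 \<and> matrix_inv G ** G = mat 1"
    unfolding matrix_inv_def invertible_def by (rule someI_ex)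
  then show ?thesis
    by (simp add: matrix_vector_mul_assoc)
qed

section \<open>Subgradients\<close>

lemma subdiff_monotone:
  assumes "\<And>z. f z \<noteq> -\<infinity>" and "u \<in> subdiff f x" and "v \<in> subdiff f y"
  shows "0 \<le> (u - v) \<bullet> (x - y)"
proof -
  have "f x < \<infinity>" "f y < \<infinity>"
    and "f y \<ge> f x + ereal (u \<bullet> (y - x))" "f x \<ge> f y + ereal (v \<bullet> (x - y))"
    using assms(2,3) unfolding subdiff_def by auto
  moreover obtain fx fy where "f x = ereal fx" "f y = ereal fy"
    using calculation(1,2) assms(1) by (metis ereal_infty_less(1) real_of_ereal.elims)
  ultimately show ?thesis
    by (simp add: inner_diff_left inner_diff_right inner_commute)
qed

lemma convex_fun_min_plus_quadratic:
  fixes g :: "'a::real_vector \<Rightarrow> ereal"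
  assumes "convex_fun g" and "\<And>z. g z \<noteq> -\<infinity>" and "g y < \<infinity>"
    and min: "\<And>z. g y + ereal (\<psi> y) \<le> g z + ereal (\<psi> z)"
    and expand: "\<And>t. \<psi> (y + t *\<^sub>R (w - y)) - \<psi> y = t * D + t\<^sup>2 * C"
  shows "g y + ereal (- D) \<le> g w"
proof (cases "g w = \<infinity>")
  case False
  obtain gy where gy: "g y = ereal gy"
    using assms(2,3) by (cases "g y") auto
  obtain gw where gw: "g w = ereal gw"
    using False assms(2) by (cases "g w") auto
  have "gy - D \<le> gw"
  proof (rule ccontr)
    assume "\<not> gy - D \<le> gw"
    define \<epsilon> where "\<epsilon> = gy - D - gw"
    define t where "t = min (1/2) (\<epsilon> / (\<bar>C\<bar> + 1))"
    have "0 < \<epsilon>"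
      using \<open>\<not> gy - D \<le> gw\<close> unfolding \<epsilon>_def by simp
    then have t: "0 < t" "t < 1"
      unfolding t_def by auto
    have "t * C < \<epsilon>"
    proof -
      have "t * C \<le> t * \<bar>C\<bar>"
        using t by (intro mult_left_mono) auto
      also have "\<dots> \<le> (\<epsilon> / (\<bar>C\<bar> + 1)) * \<bar>C\<bar>"
        unfolding t_def by (intro mult_right_mono) auto
      also have "\<dots> < \<epsilon>"
        using \<open>0 < \<epsilon>\<close> by (simp add: field_simps)
      finally show ?thesis .
    qed
    have "(y, gy) \<in> epigraph g" "(w, gw) \<in> epigraph g"
      unfolding epigraph_def using gy gw by auto
    then have "(1 - t) *\<^sub>R (y, gy) + t *\<^sub>R (w, gw) \<in> epigraph g"
      using assms(1) t unfolding convex_fun_def by (intro convexD) auto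
    moreover have "(1 - t) *\<^sub>R y + t *\<^sub>R w = y + t *\<^sub>R (w - y)"
      by (simp add: algebra_simps)
    ultimately have "g (y + t *\<^sub>R (w - y)) \<le> ereal ((1 - t) * gy + t * gw)"
      unfolding epigraph_def by simp
    then have "g (y + t *\<^sub>R (w - y)) + ereal (\<psi> (y + t *\<^sub>R (w - y)))
        \<le> ereal ((1 - t) * gy + t * gw) + ereal (\<psi> (y + t *\<^sub>R (w - y)))"
      by (rule add_right_mono)
    with min[of "y + t *\<^sub>R (w - y)"]
    have "ereal gy + ereal (\<psi> y) \<le> ereal ((1 - t) * gy + t * gw) + ereal (\<psi> (y + t *\<^sub>R (w - y)))"
      unfolding gy by (rule order_trans)
    then have "gy + \<psi> y \<le> (1 - t) * gy + t * gw + \<psi> (y + t *\<^sub>R (w - y))"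
      by simp
    then have "t * \<epsilon> \<le> t * (t * C)"
      using expand[of t] unfolding \<epsilon>_def by (simp add: algebra_simps power2_eq_square)
    then show False
      using t \<open>t * C < \<epsilon>\<close> by simp
  qed
  then show ?thesis
    using gy gw by simp
qed simp

lemma prox_objective_expansion:
  fixes B :: "real^'p^'m" and H :: "real^'p^'p" and a b c :: "real^'m" and y yp v :: "real^'p"
    and \<beta> t :: real
  assumes "transpose H = H"
  defines "\<psi> \<equiv> \<lambda>z. - (c \<bullet> (B *v z)) + \<beta> / 2 * (norm (a + B *v z - b))\<^sup>2 + 1 / 2 * qnorm2 H (z - yp)"
  shows "\<psi> (y + t *\<^sub>R v) - \<psi> y
           = t * ((H *v (y - yp)) \<bullet> v - (c - \<beta> *\<^sub>R (a + B *v y - b)) \<bullet> (B *v v))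
             + t\<^sup>2 * ((\<beta> * ((B *v v) \<bullet> (B *v v)) + qnorm2 H v) / 2)"
proof -
  have residual: "a + B *v (y + t *\<^sub>R v) - b = (a + B *v y - b) + t *\<^sub>R (B *v v)"
    by (simp add: matrix_vector_right_distrib matrix_vector_mult_scaleR)
  have prox_term: "qnorm2 H (y + t *\<^sub>R v - yp)
      = qnorm2 H (y - yp) + 2 * t * ((H *v (y - yp)) \<bullet> v) + t\<^sup>2 * qnorm2 H v"
  proof -
    have shift: "y + t *\<^sub>R v - yp = (y - yp) + t *\<^sub>R v"
      by simp
    show ?thesis
      unfolding shift qnorm2_add[OF assms(1)] qnorm2_scaleR by simp
  qed
  show ?thesis
    unfolding \<psi>_def residual prox_term power2_norm_eq_inner
    by (simp add: matrix_vector_right_distrib matrix_vector_mult_scaleR inner_add_left inner_add_right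
        inner_diff_left inner_diff_right inner_commute algebra_simps power2_eq_square)
qed

lemma prox_subproblem_subgradient:
  fixes g :: "real^'p \<Rightarrow> ereal" and B :: "real^'p^'m" and H :: "real^'p^'p"
  assumes "proper_fun g" and "convex_fun g" and "transpose H = H"
    and min: "\<And>z. g y + ereal (- (c \<bullet> (B *v y)) + \<beta> / 2 * (norm (a + B *v y - b))\<^sup>2 + 1 / 2 * qnorm2 H (y - yp))
                \<le> g z + ereal (- (c \<bullet> (B *v z)) + \<beta> / 2 * (norm (a + B *v z - b))\<^sup>2 + 1 / 2 * qnorm2 H (z - yp))"
  shows "transpose B *v (c - \<beta> *\<^sub>R (a + B *v y - b)) - H *v (y - yp) \<in> subdiff g y"
proof -
  have g_not_minf: "\<And>z. g z \<noteq> -\<infinity>"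
    using assms(1) unfolding proper_fun_def by auto
  have "g y < \<infinity>"
  proof -
    obtain z where "g z < \<infinity>"
      using assms(1) unfolding proper_fun_def by auto
    then show ?thesis
      using min[of z] by auto
  qed
  moreover have "g y + ereal ((transpose B *v (c - \<beta> *\<^sub>R (a + B *v y - b)) - H *v (y - yp)) \<bullet> (w - y)) \<le> g w"
    for w
  proof -
    define \<psi> where "\<psi> z = - (c \<bullet> (B *v z)) + \<beta> / 2 * (norm (a + B *v z - b))\<^sup>2 + 1 / 2 * qnorm2 H (z - yp)"
      for z
    have "g y + ereal (- ((H *v (y - yp)) \<bullet> (w - y) - (c - \<beta> *\<^sub>R (a + B *v y - b)) \<bullet> (B *v (w - y)))) \<le> g w"
    proof (rule convex_fun_min_plus_quadratic[OF assms(2) g_not_minf \<open>g y < \<infinity>\<close>])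
      show "g y + ereal (\<psi> y) \<le> g z + ereal (\<psi> z)" for z
        unfolding \<psi>_def by (rule min)
      show "\<psi> (y + t *\<^sub>R (w - y)) - \<psi> y
          = t * ((H *v (y - yp)) \<bullet> (w - y) - (c - \<beta> *\<^sub>R (a + B *v y - b)) \<bullet> (B *v (w - y)))
            + t\<^sup>2 * ((\<beta> * ((B *v (w - y)) \<bullet> (B *v (w - y))) + qnorm2 H (w - y)) / 2)" for t
        unfolding \<psi>_def by (rule prox_objective_expansion[OF assms(3)])
    qed
    then show ?thesis
      by (simp add: dot_lmul_matrix inner_diff_left inner_add_left algebra_simps)
  qed
  ultimately show ?thesis
    unfolding subdiff_def by auto
qed

section \<open>The M-seminorm\<close>

definition Mblock :: "real \<Rightarrow> real \<Rightarrow> real \<Rightarrow> 'a::real_inner \<Rightarrow> 'a \<Rightarrow> real" where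
  "Mblock \<beta> \<tau> \<theta> v g = ((\<tau> - \<tau> * \<theta> + \<theta>) * \<beta> / (\<tau> + \<theta>)) * (v \<bullet> v)
     - 2 * (\<tau> / (\<tau> + \<theta>)) * (v \<bullet> g) + (1 / ((\<tau> + \<theta>) * \<beta>)) * (g \<bullet> g)"

lemma Mnorm2_eq_Mblock:
  "Mnorm2 G H B \<beta> \<tau> \<theta> x y g = qnorm2 G x + qnorm2 H y + Mblock \<beta> \<tau> \<theta> (B *v y) g"
  unfolding Mnorm2_def Mblock_def qnorm2_add_transpose_mult by simp

lemma Mblock_completed_square:
  assumes "0 < \<tau> + \<theta>" and "0 < \<beta>"
  shows "Mblock \<beta> \<tau> \<theta> v g
           = (1 - \<tau>) * \<beta> * (v \<bullet> v) + (1 / ((\<tau> + \<theta>) * \<beta>)) * ((g - (\<tau> * \<beta>) *\<^sub>R v) \<bullet> (g - (\<tau> * \<beta>) *\<^sub>R v))"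
proof -
  (* Substituting theta = s - tau turns the denominator tau + theta into an atom that field_simps
     can clear; the same device is used in the identities below. *)
  obtain s where s: "\<theta> = s - \<tau>" "s \<noteq> 0"
    using assms(1) by (intro that[of "\<tau> + \<theta>"]) auto
  then show ?thesis
    unfolding Mblock_def s(1) using assms(2)
    by (simp add: inner_diff_left inner_diff_right inner_commute field_simps)
qed

lemma Mblock_fejer_identity:
  fixes a v0 v1 e :: "'a::real_inner"
  assumes "0 < \<tau> + \<theta>" and "0 < \<beta>"
  shows "Mblock \<beta> \<tau> \<theta> (-v0) (-e)
       - Mblock \<beta> \<tau> \<theta> (-v1) (-(e - (\<tau> * \<beta>) *\<^sub>R (a + v0) - (\<theta> * \<beta>) *\<^sub>R (a + v1)))
       - Mblock \<beta> \<tau> \<theta> (v1 - v0) (-\<beta> *\<^sub>R (a + v0))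
       + Mblock \<beta> \<tau> \<theta> 0 (((\<tau> - 1) * \<beta>) *\<^sub>R (a + v0) + (\<theta> * \<beta>) *\<^sub>R (a + v1))
     = 2 * ((e - \<beta> *\<^sub>R (a + v0)) \<bullet> a) + 2 * ((e - (\<tau> * \<beta>) *\<^sub>R (a + v0) - \<beta> *\<^sub>R (a + v1)) \<bullet> v1)"
proof -
  obtain s where s: "\<theta> = s - \<tau>" "s \<noteq> 0"
    using assms(1) by (intro that[of "\<tau> + \<theta>"]) auto
  then show ?thesis
    unfolding Mblock_def s(1) using assms(2)
    by (simp add: inner_diff_left inner_diff_right inner_add_left inner_add_right inner_commute field_simps)
qed

definition phi_form :: "real \<Rightarrow> real \<Rightarrow> real \<Rightarrow> real \<Rightarrow> 'a::real_inner \<Rightarrow> 'a \<Rightarrow> real" where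
  "phi_form \<sigma>t \<tau> \<theta> \<sigma> r w =
     phi_tilde \<sigma>t \<tau> \<theta> \<sigma> * (r \<bullet> r) - 2 * phi \<sigma>t \<tau> \<theta> \<sigma> * (r \<bullet> w) + phi_hat \<sigma>t \<tau> \<theta> \<sigma> * (w \<bullet> w)"

lemma Mblock_step_identity:
  fixes r w :: "'a::real_inner"
  assumes "0 < \<tau> + \<theta>" and "0 < \<beta>"
  shows "\<sigma> * Mblock \<beta> \<tau> \<theta> w (-\<beta> *\<^sub>R (r - w)) - (\<sigma>t / \<beta>) * (norm (-\<beta> *\<^sub>R (r - w)))\<^sup>2
           - Mblock \<beta> \<tau> \<theta> 0 (((\<tau> - 1) * \<beta>) *\<^sub>R (r - w) + (\<theta> * \<beta>) *\<^sub>R r)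
         = (\<beta> / (\<tau> + \<theta>)) * phi_form \<sigma>t \<tau> \<theta> \<sigma> r w"
proof -
  obtain s where s: "\<theta> = s - \<tau>" "s \<noteq> 0"
    using assms(1) by (intro that[of "\<tau> + \<theta>"]) auto
  then show ?thesis
    unfolding Mblock_def s(1) phi_form_def phi_def phi_hat_def phi_tilde_def power2_norm_eq_inner
    using assms(2)
    by (simp add: inner_diff_left inner_diff_right inner_add_left inner_add_right inner_commute
        field_simps power2_eq_square)
qed

lemma binary_quadratic_form_nonneg:
  fixes x y :: "'a::real_inner"
  assumes "0 < a" and "c\<^sup>2 \<le> a * b"
  shows "0 \<le> a * (x \<bullet> x) - 2 * c * (x \<bullet> y) + b * (y \<bullet> y)"
proof -
  have "a * (a * (x \<bullet> x) - 2 * c * (x \<bullet> y) + b * (y \<bullet> y))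
      = (a *\<^sub>R x - c *\<^sub>R y) \<bullet> (a *\<^sub>R x - c *\<^sub>R y) + (a * b - c\<^sup>2) * (y \<bullet> y)"
    by (simp add: inner_diff_left inner_diff_right inner_commute algebra_simps power2_eq_square)
  also have "\<dots> \<ge> 0"
    using assms(2) by (intro add_nonneg_nonneg mult_nonneg_nonneg) auto
  finally show ?thesis
    using assms(1) by (simp add: zero_le_mult_iff)
qed

lemma Mblock_pair_lower_bound:
  fixes q g g' r w :: "'a::real_inner"
  assumes "0 < \<tau> + \<theta>" and "0 < \<beta>" and "\<tau> < 1" and "0 < \<rho>"
    and "0 < 4 - \<tau> - \<theta> - 2 * \<sigma>t"
    and discr: "(1 + \<tau> + \<rho> * (1 - \<tau> - \<sigma>t))\<^sup>2
               \<le> (\<rho> * (4 - \<tau> - \<theta> - 2 * \<sigma>t) / 2) * (\<rho> * (3 - 3 * \<tau> - 2 * \<sigma>t) / 2)"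
    and g': "g' - (\<tau> * \<beta>) *\<^sub>R (q - w) = g - (\<tau> * \<beta>) *\<^sub>R q + ((\<tau> + \<theta>) * \<beta>) *\<^sub>R r"
  shows "2 * (1 + \<tau>) * \<beta> * (r \<bullet> w)
           \<le> \<rho> * (Mblock \<beta> \<tau> \<theta> q g + Mblock \<beta> \<tau> \<theta> (q - w) g' + (\<beta> / (\<tau> + \<theta>)) * phi_form \<sigma>t \<tau> \<theta> 1 r w)"
proof -
  define p where "p = g - (\<tau> * \<beta>) *\<^sub>R q"
  define Q where "Q = (\<rho> * (4 - \<tau> - \<theta> - 2 * \<sigma>t) / 2) * (r \<bullet> r)
      - 2 * (1 + \<tau> + \<rho> * (1 - \<tau> - \<sigma>t)) * (r \<bullet> w) + (\<rho> * (3 - 3 * \<tau> - 2 * \<sigma>t) / 2) * (w \<bullet> w)"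
  have "0 \<le> Q"
    unfolding Q_def using assms(4,5) discr by (intro binary_quadratic_form_nonneg) auto
  have M0: "Mblock \<beta> \<tau> \<theta> q g = (1 - \<tau>) * \<beta> * (q \<bullet> q) + (1 / ((\<tau> + \<theta>) * \<beta>)) * (p \<bullet> p)"
    unfolding Mblock_completed_square[OF assms(1,2)] p_def ..
  have M1: "Mblock \<beta> \<tau> \<theta> (q - w) g' = (1 - \<tau>) * \<beta> * ((q - w) \<bullet> (q - w))
      + (1 / ((\<tau> + \<theta>) * \<beta>)) * ((p + ((\<tau> + \<theta>) * \<beta>) *\<^sub>R r) \<bullet> (p + ((\<tau> + \<theta>) * \<beta>) *\<^sub>R r))"
    unfolding Mblock_completed_square[OF assms(1,2)] g' p_def ..
  obtain s where s: "\<theta> = s - \<tau>" "s \<noteq> 0"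
    using assms(1) by (intro that[of "\<tau> + \<theta>"]) auto
  have "\<rho> * (Mblock \<beta> \<tau> \<theta> q g + Mblock \<beta> \<tau> \<theta> (q - w) g' + (\<beta> / (\<tau> + \<theta>)) * phi_form \<sigma>t \<tau> \<theta> 1 r w)
          - 2 * (1 + \<tau>) * \<beta> * (r \<bullet> w)
      = 2 * \<rho> * (1 - \<tau>) * \<beta> * ((q - (1/2) *\<^sub>R w) \<bullet> (q - (1/2) *\<^sub>R w))
        + (2 * \<rho> / ((\<tau> + \<theta>) * \<beta>)) * ((p + ((\<tau> + \<theta>) * \<beta> / 2) *\<^sub>R r) \<bullet> (p + ((\<tau> + \<theta>) * \<beta> / 2) *\<^sub>R r))
        + \<beta> * Q"
    unfolding M0 M1 unfolding Q_def phi_form_def phi_def phi_hat_def phi_tilde_def s(1)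
    using s(2) assms(2)
    by (simp add: inner_diff_left inner_diff_right inner_add_left inner_add_right inner_commute
        field_simps power2_eq_square)
  also have "\<dots> \<ge> 0"
    using \<open>0 \<le> Q\<close> assms(1-4) by (intro add_nonneg_nonneg mult_nonneg_nonneg) auto
  finally show ?thesis by simp
qed

section \<open>Step-size parameters\<close>

lemma region_R_alpha_pos:
  assumes "region_R \<sigma>t \<tau> \<theta>" and "0 \<le> \<sigma>t"
  shows "0 < 2 - \<tau> - \<theta> - \<sigma>t"
proof (rule ccontr)
  assume neg: "\<not> ?thesis"
  have "0 < (1 - \<tau>) * (1 + \<tau>)"
    using assms unfolding region_R_def by (intro mult_pos_pos) auto
  then have "(1 - \<tau>\<^sup>2) * (2 - \<tau> - \<theta> - \<sigma>t) \<le> 0"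
    using neg by (intro mult_nonneg_nonpos) (auto simp: power2_eq_square algebra_simps)
  moreover have "0 \<le> (1 - \<theta>)\<^sup>2 * (1 - \<tau> - \<sigma>t)"
    using assms unfolding region_R_def by auto
  ultimately show False
    using assms(1) unfolding region_R_def by linarith
qed

lemma vartheta_radicand_gt:
  assumes "region_R \<sigma>t \<tau> \<theta>" and "0 \<le> \<sigma>t" and "\<sigma>t < 1"
  shows "4 * (1 - \<tau> - \<sigma>t)\<^sup>2 < (3 - 3 * \<tau> - 2 * \<sigma>t) * (4 - \<tau> - \<theta> - 2 * \<sigma>t)"
proof -
  have r: "-1 < \<tau>" "\<tau> < 1 - \<sigma>t"
    and reg: "(1 - \<theta>)\<^sup>2 * (1 - \<tau> - \<sigma>t) < (1 - \<tau>\<^sup>2) * (2 - \<tau> - \<theta> - \<sigma>t)"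
    using assms(1) unfolding region_R_def by auto
  have \<alpha>: "0 < 2 - \<tau> - \<theta> - \<sigma>t"
    using region_R_alpha_pos assms(1,2) .
  show ?thesis
  proof (cases "3 * \<theta> < 8 + \<tau> - 2 * \<sigma>t")
    case True
    then have "4 * (1 - \<tau> - \<sigma>t) < 3 * (4 - \<tau> - \<theta> - 2 * \<sigma>t)"
      by (simp add: algebra_simps)
    then have "(1 - \<tau> - \<sigma>t) * (4 * (1 - \<tau> - \<sigma>t)) < (1 - \<tau> - \<sigma>t) * (3 * (4 - \<tau> - \<theta> - 2 * \<sigma>t))"
      using r by (intro mult_strict_left_mono) auto
    also have "\<dots> \<le> (3 - 3 * \<tau> - 2 * \<sigma>t) * (4 - \<tau> - \<theta> - 2 * \<sigma>t)"
    proof -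
      have "0 \<le> \<sigma>t * (4 - \<tau> - \<theta> - 2 * \<sigma>t)"
        using assms(2,3) \<alpha> by (intro mult_nonneg_nonneg) auto
      then show ?thesis
        by (simp add: algebra_simps)
    qed
    finally show ?thesis
      by (simp add: power2_eq_square algebra_simps)
  next
    case False
    (* Then tau < -1/2 and theta >= 5/3, which the region condition rules out. *)
    then have "\<tau> < -1/2" "5/3 \<le> \<theta>" "3 * (2 - \<tau> - \<theta> - \<sigma>t) \<le> -2 - 4 * \<tau>"
      using r \<alpha> assms(2,3) by (simp_all add: algebra_simps)
    have "(1 - \<tau>\<^sup>2) * (2 - \<tau> - \<theta> - \<sigma>t) \<le> (2 * (1 + \<tau>)) * (2 - \<tau> - \<theta> - \<sigma>t)"
      using r \<alpha> zero_le_power2[of "1 + \<tau>"]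
      by (intro mult_right_mono) (auto simp: power2_eq_square algebra_simps)
    also have "\<dots> \<le> (2 * (1 + \<tau>)) * ((-2 - 4 * \<tau>) / 3)"
      using r \<open>3 * (2 - \<tau> - \<theta> - \<sigma>t) \<le> -2 - 4 * \<tau>\<close> by (intro mult_left_mono) auto
    also have "\<dots> \<le> 1/6"
      using zero_le_power2[of "4 * \<tau> + 3"] by (simp add: power2_eq_square algebra_simps)
    finally have "(1 - \<tau>\<^sup>2) * (2 - \<tau> - \<theta> - \<sigma>t) \<le> 1/6" .
    moreover have "2/9 \<le> (1 - \<theta>)\<^sup>2 * (1 - \<tau> - \<sigma>t)"
    proof -
      have "(2/3)\<^sup>2 \<le> (\<theta> - 1)\<^sup>2"
        using \<open>5/3 \<le> \<theta>\<close> by (intro power_mono) auto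
      then have "(2/3)\<^sup>2 * (1/2) \<le> (1 - \<theta>)\<^sup>2 * (1 - \<tau> - \<sigma>t)"
        using \<open>\<tau> < -1/2\<close> assms(3) by (intro mult_mono) (auto simp: power2_commute)
      then show ?thesis
        by (simp add: power_divide)
    qed
    ultimately have False
      using reg by linarith
    then show ?thesis ..
  qed
qed

lemma vartheta_pos:
  assumes "region_R \<sigma>t \<tau> \<theta>" and "0 \<le> \<sigma>t" and "\<sigma>t < 1"
  shows "0 < vartheta \<sigma>t \<tau> \<theta>"
proof -
  have "0 < 1 - \<tau> - \<sigma>t"
    using assms(1) unfolding region_R_def by auto
  then have "2 * (1 - \<tau> - \<sigma>t) < sqrt ((3 - 3 * \<tau> - 2 * \<sigma>t) * (4 - \<tau> - \<theta> - 2 * \<sigma>t))"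
    using vartheta_radicand_gt[OF assms]
    by (intro real_less_rsqrt) (simp add: power2_eq_square algebra_simps)
  then show ?thesis
    unfolding vartheta_def by simp
qed

(* Since vartheta + 2 (1 - tau - sigma_t) is the square root of the radicand in vartheta, the
   multiplier rho = 2 (1 + tau + vartheta) / vartheta satisfies the discriminant condition of
   Mblock_pair_lower_bound; the constant 4 (1 + tau + vartheta) / vartheta = 2 rho in eta_0 comes
   from here. *)
lemma vartheta_discriminant:
  fixes \<sigma>t \<tau> \<theta> :: real
  defines "\<Theta> \<equiv> vartheta \<sigma>t \<tau> \<theta>"
  assumes "0 < \<Theta>" and "0 < 1 + \<tau>" and "0 < 1 - \<tau> - \<sigma>t"
    and "0 \<le> 3 - 3 * \<tau> - 2 * \<sigma>t" and "0 \<le> 4 - \<tau> - \<theta> - 2 * \<sigma>t"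
    and \<rho>: "\<rho> * \<Theta> = 2 * (1 + \<tau> + \<Theta>)"
  shows "(1 + \<tau> + \<rho> * (1 - \<tau> - \<sigma>t))\<^sup>2
           \<le> (\<rho> * (4 - \<tau> - \<theta> - 2 * \<sigma>t) / 2) * (\<rho> * (3 - 3 * \<tau> - 2 * \<sigma>t) / 2)"
proof -
  have "0 < \<rho> * \<Theta>"
    using \<rho> assms(2,3) by simp
  then have "0 < \<rho>"
    using assms(2) by (simp add: zero_less_mult_iff)
  have "(1 + \<tau> + \<rho> * (1 - \<tau> - \<sigma>t))\<^sup>2 \<le> ((1 + \<tau> + \<Theta>) + \<rho> * (1 - \<tau> - \<sigma>t))\<^sup>2"
    using assms(2-4) \<open>0 < \<rho>\<close> by (intro power_mono) auto
  also have "\<dots> = ((\<rho> / 2) * (\<Theta> + 2 * (1 - \<tau> - \<sigma>t)))\<^sup>2"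
  proof -
    have "(1 + \<tau> + \<Theta>) + \<rho> * (1 - \<tau> - \<sigma>t) = (\<rho> / 2) * (\<Theta> + 2 * (1 - \<tau> - \<sigma>t))"
      using \<rho> by (simp add: algebra_simps)
    then show ?thesis
      by (simp only:)
  qed
  also have "\<dots> = (\<rho> / 2)\<^sup>2 * (\<Theta> + 2 * (1 - \<tau> - \<sigma>t))\<^sup>2"
    by (simp only: power_mult_distrib)
  also have "(\<Theta> + 2 * (1 - \<tau> - \<sigma>t))\<^sup>2 = (3 - 3 * \<tau> - 2 * \<sigma>t) * (4 - \<tau> - \<theta> - 2 * \<sigma>t)"
    unfolding \<Theta>_def vartheta_def using assms(5,6) by simp
  also have "(\<rho> / 2)\<^sup>2 * ((3 - 3 * \<tau> - 2 * \<sigma>t) * (4 - \<tau> - \<theta> - 2 * \<sigma>t))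
      = (\<rho> * (4 - \<tau> - \<theta> - 2 * \<sigma>t) / 2) * (\<rho> * (3 - 3 * \<tau> - 2 * \<sigma>t) / 2)"
    by (simp add: power2_eq_square algebra_simps)
  finally show ?thesis .
qed

section \<open>One step of the iteration\<close>

locale inexact_sym_prox_admm =
  fixes f :: "real^'n \<Rightarrow> ereal" and g :: "real^'p \<Rightarrow> ereal"
    and A :: "real^'n^'m" and B :: "real^'p^'m" and b :: "real^'m"
    and G :: "real^'n^'n" and H :: "real^'p^'p"
    and \<beta> \<sigma>t \<sigma>h \<tau> \<theta> :: real
    and x :: "nat \<Rightarrow> real^'n" and y :: "nat \<Rightarrow> real^'p" and \<gamma> :: "nat \<Rightarrow> real^'m"
    and xt :: "nat \<Rightarrow> real^'n" and u :: "nat \<Rightarrow> real^'n" and \<gamma>t :: "nat \<Rightarrow> real^'m"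
  assumes f_proper: "proper_fun f" and g_proper: "proper_fun g" and g_convex: "convex_fun g"
    and \<beta>_pos: "0 < \<beta>" and \<sigma>t_nonneg: "0 \<le> \<sigma>t" and \<sigma>t_less_1: "\<sigma>t < 1"
    and \<sigma>h_nonneg: "0 \<le> \<sigma>h" and \<sigma>h_less_1: "\<sigma>h < 1"
    and G: "sym_pd G" and H: "sym_psd H" and region: "region_R \<sigma>t \<tau> \<theta>"
    and \<gamma>t_def: "\<And>j. j \<ge> 1 \<Longrightarrow> \<gamma>t j = \<gamma> (j - 1) - \<beta> *\<^sub>R (A *v xt j + B *v y (j - 1) - b)"
    and u_subgradient: "\<And>j. j \<ge> 1 \<Longrightarrow> u j + transpose A *v \<gamma>t j \<in> subdiff f (xt j)"
    and x_error: "\<And>j. j \<ge> 1 \<Longrightarrow>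
        qnorm2 G (xt j - x (j - 1) + matrix_inv G *v u j)
          \<le> (\<sigma>t / \<beta>) * (norm (\<gamma>t j - \<gamma> (j - 1)))\<^sup>2 + \<sigma>h * qnorm2 G (xt j - x (j - 1))"
    and y_min: "\<And>j w. j \<ge> 1 \<Longrightarrow>
        g (y j) + ereal (- ((\<gamma> (j - 1) - (\<tau> * \<beta>) *\<^sub>R (A *v xt j + B *v y (j - 1) - b)) \<bullet> (B *v y j))
                         + \<beta> / 2 * (norm (A *v xt j + B *v y j - b))\<^sup>2
                         + 1 / 2 * qnorm2 H (y j - y (j - 1)))
        \<le> g w + ereal (- ((\<gamma> (j - 1) - (\<tau> * \<beta>) *\<^sub>R (A *v xt j + B *v y (j - 1) - b)) \<bullet> (B *v w))
                         + \<beta> / 2 * (norm (A *v xt j + B *v w - b))\<^sup>2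
                         + 1 / 2 * qnorm2 H (w - y (j - 1)))"
    and x_update: "\<And>j. j \<ge> 1 \<Longrightarrow> x j = x (j - 1) - matrix_inv G *v u j"
    and \<gamma>_update: "\<And>j. j \<ge> 1 \<Longrightarrow>
        \<gamma> j = (\<gamma> (j - 1) - (\<tau> * \<beta>) *\<^sub>R (A *v xt j + B *v y (j - 1) - b))
              - (\<theta> * \<beta>) *\<^sub>R (A *v xt j + B *v y j - b)"
begin

abbreviation Mn :: "real^'n \<Rightarrow> real^'p \<Rightarrow> real^'m \<Rightarrow> real" where
  "Mn \<equiv> Mnorm2 G H B \<beta> \<tau> \<theta>"

definition resid :: "nat \<Rightarrow> real^'m" where
  "resid j = A *v xt j + B *v y j - b"

definition ystep :: "nat \<Rightarrow> real^'p" where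
  "ystep j = y j - y (j - 1)"

definition \<gamma>mid :: "nat \<Rightarrow> real^'m" where
  "\<gamma>mid j = \<gamma> (j - 1) - (\<tau> * \<beta>) *\<^sub>R (A *v xt j + B *v y (j - 1) - b)"

lemma region_bounds: "\<tau> < 1" "0 < 1 + \<tau>" "0 < \<tau> + \<theta>" "0 < 1 - \<tau> - \<sigma>t"
  using region \<sigma>t_nonneg unfolding region_R_def by auto

lemma G_symmetric: "transpose G = G" and H_symmetric: "transpose H = H"
  using G H unfolding sym_pd_def sym_psd_def by auto

lemma qnorm2_G_nonneg: "0 \<le> qnorm2 G v" and qnorm2_H_nonneg: "0 \<le> qnorm2 H w"
  using sym_psd_qnorm2_nonneg[OF sym_pd_imp_sym_psd[OF G]] sym_psd_qnorm2_nonneg[OF H] by auto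

lemma resid_prev: "A *v xt j + B *v y (j - 1) - b = resid j - B *v ystep j"
  unfolding resid_def ystep_def by (simp add: matrix_vector_mult_diff_distrib algebra_simps)

lemma \<gamma>mid_eq: "\<gamma>mid j = \<gamma> (j - 1) - (\<tau> * \<beta>) *\<^sub>R (resid j - B *v ystep j)"
  unfolding \<gamma>mid_def resid_prev ..

lemma \<gamma>_eq: "j \<ge> 1 \<Longrightarrow> \<gamma> j = \<gamma>mid j - (\<theta> * \<beta>) *\<^sub>R resid j"
  unfolding \<gamma>mid_def resid_def by (rule \<gamma>_update)

lemma \<gamma>t_step: "j \<ge> 1 \<Longrightarrow> \<gamma>t j - \<gamma> (j - 1) = -\<beta> *\<^sub>R (resid j - B *v ystep j)"
  using \<gamma>t_def unfolding resid_prev by simp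

lemma \<gamma>t_minus_\<gamma>:
  assumes "j \<ge> 1"
  shows "\<gamma>t j - \<gamma> j = ((\<tau> - 1) * \<beta>) *\<^sub>R (resid j - B *v ystep j) + (\<theta> * \<beta>) *\<^sub>R resid j"
proof -
  have "\<gamma>t j - \<gamma> j = (\<gamma>t j - \<gamma> (j - 1)) + (\<gamma> (j - 1) - \<gamma>mid j) + (\<gamma>mid j - \<gamma> j)"
    by simp
  then show ?thesis
    unfolding \<gamma>t_step[OF assms] \<gamma>_eq[OF assms] \<gamma>mid_eq by (simp add: algebra_simps)
qed

lemma u_eq: "j \<ge> 1 \<Longrightarrow> u j = G *v (x (j - 1) - x j)"
  using x_update sym_pd_mult_matrix_inv[OF G] by simp

lemma f_subgradient: "j \<ge> 1 \<Longrightarrow> G *v (x (j - 1) - x j) + transpose A *v \<gamma>t j \<in> subdiff f (xt j)"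
  using u_subgradient u_eq by simp

lemma y_subgradient:
  "j \<ge> 1 \<Longrightarrow> transpose B *v (\<gamma>mid j - \<beta> *\<^sub>R resid j) - H *v ystep j \<in> subdiff g (y j)"
  using prox_subproblem_subgradient[OF g_proper g_convex H_symmetric y_min]
  unfolding \<gamma>mid_def resid_def ystep_def by simp

lemma step_decrease:
  assumes "j \<ge> 1" and "\<sigma>h \<le> \<sigma>'"
  shows "(\<beta> / (\<tau> + \<theta>)) * phi_form \<sigma>t \<tau> \<theta> \<sigma>' (resid j) (B *v ystep j) + \<sigma>' * qnorm2 H (ystep j)
    \<le> \<sigma>' * Mn (xt j - x (j - 1)) (ystep j) (\<gamma>t j - \<gamma> (j - 1)) - Mn (xt j - x j) 0 (\<gamma>t j - \<gamma> j)"
proof -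
  have xdiff: "xt j - x j = xt j - x (j - 1) + matrix_inv G *v u j"
    using x_update[OF assms(1)] by simp
  have "qnorm2 G (xt j - x j)
      \<le> (\<sigma>t / \<beta>) * (norm (-\<beta> *\<^sub>R (resid j - B *v ystep j)))\<^sup>2 + \<sigma>h * qnorm2 G (xt j - x (j - 1))"
    using x_error[OF assms(1)] unfolding xdiff \<gamma>t_step[OF assms(1)] .
  moreover have "\<sigma>h * qnorm2 G (xt j - x (j - 1)) \<le> \<sigma>' * qnorm2 G (xt j - x (j - 1))"
    using assms(2) qnorm2_G_nonneg by (intro mult_right_mono) auto
  ultimately show ?thesis
    using Mblock_step_identity[OF region_bounds(3) \<beta>_pos, of \<sigma>' "B *v ystep j" "resid j" \<sigma>t]
    unfolding Mnorm2_eq_Mblock \<gamma>t_step[OF assms(1)] \<gamma>t_minus_\<gamma>[OF assms(1)]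
    by (simp add: algebra_simps)
qed

lemma consecutive_y_monotone:
  assumes "j \<ge> 2"
  defines "w \<equiv> B *v ystep j"
  shows "0 \<le> \<beta> * (- (1 + \<tau>) * (resid j \<bullet> w) + \<tau> * (w \<bullet> w) + (1 - \<theta>) * (resid (j - 1) \<bullet> w))
             - qnorm2 H (ystep j) + (H *v ystep (j - 1)) \<bullet> ystep j"
proof -
  have "0 \<le> (transpose B *v (\<gamma>mid j - \<beta> *\<^sub>R resid j) - H *v ystep j
           - (transpose B *v (\<gamma>mid (j - 1) - \<beta> *\<^sub>R resid (j - 1)) - H *v ystep (j - 1))) \<bullet> ystep j"
    using subdiff_monotone[OF _ y_subgradient y_subgradient, of j "j - 1"] g_proper assms(1)
    unfolding proper_fun_def ystep_def by auto
  moreover have "\<gamma>mid (j - 1) = \<gamma> (j - 1) + (\<theta> * \<beta>) *\<^sub>R resid (j - 1)"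
    using \<gamma>_eq[of "j - 1"] assms(1) by simp
  ultimately show ?thesis
    unfolding w_def \<gamma>mid_eq[of j] qnorm2_def
    by (simp add: inner_diff_left inner_add_left dot_lmul_matrix algebra_simps)
qed

lemma kkt_monotone_sum:
  assumes kkt: "(xs, ys, \<gamma>s) \<in> KKT_set f g A B b" and "j \<ge> 1"
  shows "0 \<le> (G *v (x (j - 1) - x j)) \<bullet> (xt j - xs) + (\<gamma>t j - \<gamma>s) \<bullet> (A *v (xt j - xs))
           + (\<gamma>mid j - \<beta> *\<^sub>R resid j - \<gamma>s) \<bullet> (B *v (y j - ys)) - (H *v ystep j) \<bullet> (y j - ys)"
proof -
  have "transpose A *v \<gamma>s \<in> subdiff f xs" "transpose B *v \<gamma>s \<in> subdiff g ys"
    using kkt unfolding KKT_set_def by auto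
  then have "0 \<le> (G *v (x (j - 1) - x j) + transpose A *v \<gamma>t j - transpose A *v \<gamma>s) \<bullet> (xt j - xs)"
    and "0 \<le> (transpose B *v (\<gamma>mid j - \<beta> *\<^sub>R resid j) - H *v ystep j - transpose B *v \<gamma>s) \<bullet> (y j - ys)"
    using subdiff_monotone f_subgradient[OF assms(2)] y_subgradient[OF assms(2)] f_proper g_proper
    unfolding proper_fun_def by blast+
  then show ?thesis
    by (simp add: inner_diff_left inner_add_left dot_lmul_matrix algebra_simps)
qed

lemma kkt_fejer:
  assumes kkt: "(xs, ys, \<gamma>s) \<in> KKT_set f g A B b" and j: "j \<ge> 1"
  shows "Mn (xt j - x (j - 1)) (ystep j) (\<gamma>t j - \<gamma> (j - 1)) - Mn (xt j - x j) 0 (\<gamma>t j - \<gamma> j)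
    \<le> Mn (xs - x (j - 1)) (ys - y (j - 1)) (\<gamma>s - \<gamma> (j - 1)) - Mn (xs - x j) (ys - y j) (\<gamma>s - \<gamma> j)"
proof -
  define a where "a = A *v (xt j - xs)"
  define v0 where "v0 = B *v (y (j - 1) - ys)"
  define v1 where "v1 = B *v (y j - ys)"
  define e where "e = \<gamma> (j - 1) - \<gamma>s"
  have feasible: "A *v xs + B *v ys - b = 0"
    using kkt unfolding KKT_set_def by auto
  have resid: "resid j = a + v1" and resid_prev: "resid j - B *v ystep j = a + v0"
    using feasible unfolding resid_def ystep_def a_def v0_def v1_def
    by (simp_all add: matrix_vector_mult_diff_distrib algebra_simps)
  have Mblock_part:
      "Mblock \<beta> \<tau> \<theta> (B *v (ys - y (j - 1))) (\<gamma>s - \<gamma> (j - 1)) - Mblock \<beta> \<tau> \<theta> (B *v (ys - y j)) (\<gamma>s - \<gamma> j)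
       - Mblock \<beta> \<tau> \<theta> (B *v ystep j) (\<gamma>t j - \<gamma> (j - 1)) + Mblock \<beta> \<tau> \<theta> (B *v 0) (\<gamma>t j - \<gamma> j)
     = 2 * ((\<gamma>t j - \<gamma>s) \<bullet> a) + 2 * ((\<gamma>mid j - \<beta> *\<^sub>R resid j - \<gamma>s) \<bullet> v1)"
  proof -
    have "B *v (ys - y (j - 1)) = - v0" "B *v (ys - y j) = - v1" "B *v ystep j = v1 - v0"
      "\<gamma>s - \<gamma> (j - 1) = - e"
      unfolding v0_def v1_def e_def ystep_def by (simp_all add: matrix_vector_mult_diff_distrib)
    moreover have "\<gamma>t j - \<gamma> (j - 1) = -\<beta> *\<^sub>R (a + v0)"
      using \<gamma>t_step[OF j] unfolding resid_prev .
    moreover have "\<gamma>t j - \<gamma> j = ((\<tau> - 1) * \<beta>) *\<^sub>R (a + v0) + (\<theta> * \<beta>) *\<^sub>R (a + v1)"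
      using \<gamma>t_minus_\<gamma>[OF j] unfolding resid_prev unfolding resid .
    moreover have "\<gamma>mid j - \<beta> *\<^sub>R resid j - \<gamma>s = e - (\<tau> * \<beta>) *\<^sub>R (a + v0) - \<beta> *\<^sub>R (a + v1)"
      unfolding \<gamma>mid_eq resid_prev unfolding resid e_def by (simp add: algebra_simps)
    moreover have "\<gamma>s - \<gamma> j = - (e - (\<tau> * \<beta>) *\<^sub>R (a + v0) - (\<theta> * \<beta>) *\<^sub>R (a + v1))"
      unfolding \<gamma>_eq[OF j] \<gamma>mid_eq resid_prev unfolding resid e_def by (simp add: algebra_simps)
    moreover have "\<gamma>t j - \<gamma>s = e - \<beta> *\<^sub>R (a + v0)"
      using calculation(5) unfolding e_def by (simp add: algebra_simps)
    ultimately show ?thesis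
      unfolding matrix_vector_mult_0_right
      by (simp only: Mblock_fejer_identity[OF region_bounds(3) \<beta>_pos])
  qed
  have "qnorm2 G (xs - x (j - 1)) - qnorm2 G (xs - x j) - qnorm2 G (xt j - x (j - 1)) + qnorm2 G (xt j - x j)
      = 2 * ((G *v (x (j - 1) - x j)) \<bullet> (xt j - xs))"
    by (rule qnorm2_four_point[OF G_symmetric])
  moreover have "qnorm2 H (ys - y (j - 1)) - qnorm2 H (ys - y j) - qnorm2 H (ystep j) + qnorm2 H 0
      = - 2 * ((H *v ystep j) \<bullet> (y j - ys))"
    using qnorm2_four_point[OF H_symmetric, of ys "y (j - 1)" "y j" "y j"]
    unfolding ystep_def by (simp add: matrix_vector_mult_diff_distrib inner_diff_left)
  ultimately show ?thesis
    using Mblock_part kkt_monotone_sum[OF assms] unfolding Mnorm2_eq_Mblock a_def v1_def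
    by linarith
qed

lemma kkt_Mblock_sum_bound:
  assumes kkt: "(xs, ys, \<gamma>s) \<in> KKT_set f g A B b" and j: "j \<ge> 1"
  shows "Mblock \<beta> \<tau> \<theta> (B *v (ys - y (j - 1))) (\<gamma>s - \<gamma> (j - 1)) + Mblock \<beta> \<tau> \<theta> (B *v (ys - y j)) (\<gamma>s - \<gamma> j)
      + (\<beta> / (\<tau> + \<theta>)) * phi_form \<sigma>t \<tau> \<theta> 1 (resid j) (B *v ystep j) + qnorm2 H (ystep j)
    \<le> 2 * Mn (xs - x (j - 1)) (ys - y (j - 1)) (\<gamma>s - \<gamma> (j - 1))"
proof -
  have "(\<beta> / (\<tau> + \<theta>)) * phi_form \<sigma>t \<tau> \<theta> 1 (resid j) (B *v ystep j) + qnorm2 H (ystep j)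
      \<le> Mn (xt j - x (j - 1)) (ystep j) (\<gamma>t j - \<gamma> (j - 1)) - Mn (xt j - x j) 0 (\<gamma>t j - \<gamma> j)"
    using step_decrease[OF j, of 1] \<sigma>h_less_1 by simp
  also have "\<dots> \<le> Mn (xs - x (j - 1)) (ys - y (j - 1)) (\<gamma>s - \<gamma> (j - 1)) - Mn (xs - x j) (ys - y j) (\<gamma>s - \<gamma> j)"
    by (rule kkt_fejer[OF assms])
  finally show ?thesis
    unfolding Mnorm2_eq_Mblock mult_2
    using qnorm2_G_nonneg[of "xs - x (j - 1)"] qnorm2_G_nonneg[of "xs - x j"]
      qnorm2_H_nonneg[of "ys - y (j - 1)"] qnorm2_H_nonneg[of "ys - y j"]
    by linarith
qed

lemma cross_term_bound_kkt:
  assumes kkt: "(xs, ys, \<gamma>s) \<in> KKT_set f g A B b" and j: "j \<ge> 1"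
  shows "2 * (1 + \<tau>) * \<beta> * (resid j \<bullet> (B *v ystep j)) + qnorm2 H (ystep j)
    \<le> 4 * (1 + \<tau> + vartheta \<sigma>t \<tau> \<theta>) / vartheta \<sigma>t \<tau> \<theta> * Mn (xs - x (j - 1)) (ys - y (j - 1)) (\<gamma>s - \<gamma> (j - 1))"
proof -
  define \<rho> where "\<rho> = 2 * (1 + \<tau> + vartheta \<sigma>t \<tau> \<theta>) / vartheta \<sigma>t \<tau> \<theta>"
  define q where "q = B *v (ys - y (j - 1))"
  define w where "w = B *v ystep j"
  have \<vartheta>: "0 < vartheta \<sigma>t \<tau> \<theta>"
    using vartheta_pos[OF region \<sigma>t_nonneg \<sigma>t_less_1] .
  have \<rho>: "1 \<le> \<rho>" "\<rho> * vartheta \<sigma>t \<tau> \<theta> = 2 * (1 + \<tau> + vartheta \<sigma>t \<tau> \<theta>)"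
    unfolding \<rho>_def using \<vartheta> region_bounds(2) by (auto simp: field_simps)
  have X: "0 \<le> 3 - 3 * \<tau> - 2 * \<sigma>t" "0 < 4 - \<tau> - \<theta> - 2 * \<sigma>t"
    using region_bounds(4) region_R_alpha_pos[OF region \<sigma>t_nonneg] \<sigma>t_nonneg \<sigma>t_less_1
    by linarith+
  have qw: "B *v (ys - y j) = q - w"
    unfolding q_def w_def ystep_def by (simp add: matrix_vector_mult_diff_distrib)
  have "2 * (1 + \<tau>) * \<beta> * (resid j \<bullet> w)
      \<le> \<rho> * (Mblock \<beta> \<tau> \<theta> q (\<gamma>s - \<gamma> (j - 1)) + Mblock \<beta> \<tau> \<theta> (q - w) (\<gamma>s - \<gamma> j)
               + (\<beta> / (\<tau> + \<theta>)) * phi_form \<sigma>t \<tau> \<theta> 1 (resid j) w)"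
  proof (rule Mblock_pair_lower_bound[OF region_bounds(3) \<beta>_pos region_bounds(1)])
    show "(1 + \<tau> + \<rho> * (1 - \<tau> - \<sigma>t))\<^sup>2
        \<le> (\<rho> * (4 - \<tau> - \<theta> - 2 * \<sigma>t) / 2) * (\<rho> * (3 - 3 * \<tau> - 2 * \<sigma>t) / 2)"
      using vartheta_discriminant[OF \<vartheta> region_bounds(2,4) X(1) less_imp_le[OF X(2)] \<rho>(2)] .
    show "\<gamma>s - \<gamma> j - (\<tau> * \<beta>) *\<^sub>R (q - w)
        = \<gamma>s - \<gamma> (j - 1) - (\<tau> * \<beta>) *\<^sub>R q + ((\<tau> + \<theta>) * \<beta>) *\<^sub>R resid j"
      unfolding \<gamma>_eq[OF j] \<gamma>mid_eq q_def w_def ystep_def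
      by (simp add: matrix_vector_mult_diff_distrib algebra_simps)
  qed (use \<rho> X in auto)
  also have "\<dots> \<le> \<rho> * (2 * Mn (xs - x (j - 1)) (ys - y (j - 1)) (\<gamma>s - \<gamma> (j - 1)) - qnorm2 H (ystep j))"
    using kkt_Mblock_sum_bound[OF assms] \<rho>(1) unfolding q_def[symmetric] w_def[symmetric] qw
    by (intro mult_left_mono) auto
  finally show ?thesis
    using mult_right_mono[OF \<rho>(1) qnorm2_H_nonneg[of "ystep j"]] unfolding w_def \<rho>_def
    by (simp add: algebra_simps)
qed

lemma cross_term_bound_d0:
  assumes "KKT_set f g A B b \<noteq> {}"
  shows "2 * (1 + \<tau>) * \<beta> * (resid 1 \<bullet> (B *v ystep 1)) + qnorm2 H (ystep 1)
    \<le> 4 * (1 + \<tau> + vartheta \<sigma>t \<tau> \<theta>) / vartheta \<sigma>t \<tau> \<theta> * d0 f g A B b G H \<beta> \<tau> \<theta> (x 0) (y 0) (\<gamma> 0)"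
proof -
  define K where "K = 4 * (1 + \<tau> + vartheta \<sigma>t \<tau> \<theta>) / vartheta \<sigma>t \<tau> \<theta>"
  have "0 < K"
    unfolding K_def using vartheta_pos[OF region \<sigma>t_nonneg \<sigma>t_less_1] region_bounds(2) by simp
  have "(2 * (1 + \<tau>) * \<beta> * (resid 1 \<bullet> (B *v ystep 1)) + qnorm2 H (ystep 1)) / K
      \<le> d0 f g A B b G H \<beta> \<tau> \<theta> (x 0) (y 0) (\<gamma> 0)"
    unfolding d0_def
  proof (rule cInf_greatest)
    fix m
    assume "m \<in> (\<lambda>(xs, ys, \<gamma>s). Mn (xs - x 0) (ys - y 0) (\<gamma>s - \<gamma> 0)) ` KKT_set f g A B b"
    then obtain xs ys \<gamma>s where "(xs, ys, \<gamma>s) \<in> KKT_set f g A B b"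
      and "m = Mn (xs - x 0) (ys - y 0) (\<gamma>s - \<gamma> 0)"
      by auto
    then show "(2 * (1 + \<tau>) * \<beta> * (resid 1 \<bullet> (B *v ystep 1)) + qnorm2 H (ystep 1)) / K \<le> m"
      using cross_term_bound_kkt[of xs ys \<gamma>s 1] \<open>0 < K\<close> unfolding K_def[symmetric]
      by (simp add: pos_divide_le_eq mult.commute)
  qed (use assms in simp)
  then show ?thesis
    using \<open>0 < K\<close> unfolding K_def[symmetric] by (simp add: pos_divide_le_eq mult.commute)
qed

end

section \<open>Lyapunov descent\<close>

(* The weights for k >= 2, with s = tau + theta and t = 1 + tau: monotonicity of consecutive y-steps
   times 2 phi / (s t), the H-seminorm of the difference of consecutive y-steps times phi / (s t), and
   the square |phi_tilde r_(k-1) - c w_k|^2 times beta / (s phi_tilde) leave a multiple of phi_bar. *)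
lemma descent_certificate:
  fixes \<beta> \<sigma> \<theta> s t ft f fh c Hd Hd' Hx R RW W R' PW :: real
  assumes "s \<noteq> 0" "t \<noteq> 0" "\<beta> \<noteq> 0" "ft \<noteq> 0" and c: "c = f * (1 - \<theta>) / t"
  shows "(\<beta> / s) * (ft * R - 2 * f * RW + fh * W) + \<sigma> * Hd
       + (ft / (s * \<beta>) * (\<beta>\<^sup>2 * R') + f / (s * t) * Hd') - (ft / (s * \<beta>) * (\<beta>\<^sup>2 * R) + f / (s * t) * Hd)
       - (2 * f / (s * t)) * (\<beta> * (- t * RW + (t - 1) * W + (1 - \<theta>) * PW) - Hd + Hx)
       - (f / (s * t)) * (Hd - 2 * Hx + Hd')
       - (\<beta> / (s * ft)) * (ft\<^sup>2 * R' - 2 * ft * c * PW + c\<^sup>2 * W)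
     = (\<beta> / (s * t\<^sup>2 * ft)) * (((t * fh - 2 * (t - 1) * f) * t * ft - (1 - \<theta>)\<^sup>2 * f\<^sup>2) * W) + \<sigma> * Hd"
  using assms unfolding c by (simp add: field_simps power2_eq_square)

locale inexact_sym_prox_admm_sigma = inexact_sym_prox_admm +
  fixes \<sigma> :: real
  assumes KKT_nonempty: "KKT_set f g A B b \<noteq> {}"
    and \<sigma>h_le_\<sigma>: "\<sigma>h \<le> \<sigma>"
    and phi_nonneg: "0 \<le> phi \<sigma>t \<tau> \<theta> \<sigma>" and phi_hat_nonneg: "0 \<le> phi_hat \<sigma>t \<tau> \<theta> \<sigma>"
    and phi_tilde_pos: "0 < phi_tilde \<sigma>t \<tau> \<theta> \<sigma>" and phi_bar_nonneg: "0 \<le> phi_bar \<sigma>t \<tau> \<theta> \<sigma>"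
begin

definition eta :: "nat \<Rightarrow> real" where
  "eta j = (if j = 0 then
              4 * (1 + \<tau> + vartheta \<sigma>t \<tau> \<theta>) * phi \<sigma>t \<tau> \<theta> \<sigma> / ((\<tau> + \<theta>) * (1 + \<tau>) * vartheta \<sigma>t \<tau> \<theta>)
                * d0 f g A B b G H \<beta> \<tau> \<theta> (x 0) (y 0) (\<gamma> 0)
            else phi_tilde \<sigma>t \<tau> \<theta> \<sigma> / ((\<tau> + \<theta>) * \<beta>) * (norm (- \<beta> *\<^sub>R resid j))\<^sup>2
              + phi \<sigma>t \<tau> \<theta> \<sigma> / ((\<tau> + \<theta>) * (1 + \<tau>)) * qnorm2 H (ystep j))"

lemma \<sigma>_nonneg: "0 \<le> \<sigma>"
  using \<sigma>h_nonneg \<sigma>h_le_\<sigma> by simp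

lemma descent_first:
  "Mn (xt 1 - x 1) 0 (\<gamma>t 1 - \<gamma> 1) + eta 1 \<le> \<sigma> * Mn (xt 1 - x 0) (ystep 1) (\<gamma>t 1 - \<gamma> 0) + eta 0"
proof -
  define r where "r = resid 1"
  define w where "w = B *v ystep 1"
  define Hd where "Hd = qnorm2 H (ystep 1)"
  define s where "s = \<tau> + \<theta>"
  define c where "c = phi \<sigma>t \<tau> \<theta> \<sigma> / (s * (1 + \<tau>))"
  have "(\<beta> / s) * phi_form \<sigma>t \<tau> \<theta> \<sigma> r w + \<sigma> * Hd
      \<le> \<sigma> * Mn (xt 1 - x 0) (ystep 1) (\<gamma>t 1 - \<gamma> 0) - Mn (xt 1 - x 1) 0 (\<gamma>t 1 - \<gamma> 1)"
    using step_decrease[of 1 \<sigma>] \<sigma>h_le_\<sigma> unfolding r_def w_def Hd_def s_def by simp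
  moreover have "c * (2 * (1 + \<tau>) * \<beta> * (r \<bullet> w) + Hd) \<le> eta 0"
  proof -
    have "0 \<le> c"
      unfolding c_def s_def using phi_nonneg region_bounds by simp
    moreover have "c * (4 * (1 + \<tau> + vartheta \<sigma>t \<tau> \<theta>) / vartheta \<sigma>t \<tau> \<theta>
        * d0 f g A B b G H \<beta> \<tau> \<theta> (x 0) (y 0) (\<gamma> 0)) = eta 0"
      unfolding eta_def c_def s_def by simp
    ultimately show ?thesis
      using mult_left_mono[OF cross_term_bound_d0[OF KKT_nonempty]]
      unfolding r_def w_def Hd_def by metis
  qed
  moreover have "c * (2 * (1 + \<tau>) * \<beta> * (r \<bullet> w) + Hd) = (\<beta> / s) * (2 * phi \<sigma>t \<tau> \<theta> \<sigma> * (r \<bullet> w)) + c * Hd"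
  proof -
    define t where "t = 1 + \<tau>"
    have "s \<noteq> 0" "t \<noteq> 0"
      unfolding s_def t_def using region_bounds by auto
    then show ?thesis
      unfolding c_def t_def[symmetric] by (simp add: field_simps)
  qed
  moreover have "eta 1 = (\<beta> / s) * (phi_tilde \<sigma>t \<tau> \<theta> \<sigma> * (r \<bullet> r)) + c * Hd"
    unfolding eta_def c_def r_def Hd_def s_def power2_norm_eq_inner
    using \<beta>_pos by (simp add: power2_eq_square)
  moreover have "(\<beta> / s) * phi_form \<sigma>t \<tau> \<theta> \<sigma> r w = (\<beta> / s) * (phi_tilde \<sigma>t \<tau> \<theta> \<sigma> * (r \<bullet> r))
      - (\<beta> / s) * (2 * phi \<sigma>t \<tau> \<theta> \<sigma> * (r \<bullet> w)) + (\<beta> / s) * phi_hat \<sigma>t \<tau> \<theta> \<sigma> * (w \<bullet> w)"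
    unfolding phi_form_def by (simp add: algebra_simps)
  moreover have "0 \<le> (\<beta> / s) * phi_hat \<sigma>t \<tau> \<theta> \<sigma> * (w \<bullet> w)" "0 \<le> \<sigma> * Hd"
    using \<beta>_pos region_bounds(3) phi_hat_nonneg \<sigma>_nonneg qnorm2_H_nonneg unfolding s_def Hd_def
    by simp_all
  ultimately show ?thesis
    by linarith
qed

lemma descent_later:
  assumes j: "j \<ge> 2"
  shows "Mn (xt j - x j) 0 (\<gamma>t j - \<gamma> j) + eta j
           \<le> \<sigma> * Mn (xt j - x (j - 1)) (ystep j) (\<gamma>t j - \<gamma> (j - 1)) + eta (j - 1)"
proof -
  define r r' w where "r = resid j" and "r' = resid (j - 1)" and "w = B *v ystep j"
  define Hd Hd' Hx where "Hd = qnorm2 H (ystep j)" and "Hd' = qnorm2 H (ystep (j - 1))"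
    and "Hx = (H *v ystep (j - 1)) \<bullet> ystep j"
  define s t where "s = \<tau> + \<theta>" and "t = 1 + \<tau>"
  define ft f fh where "ft = phi_tilde \<sigma>t \<tau> \<theta> \<sigma>" and "f = phi \<sigma>t \<tau> \<theta> \<sigma>" and "fh = phi_hat \<sigma>t \<tau> \<theta> \<sigma>"
  define c where "c = f * (1 - \<theta>) / t"
  have pos: "0 < s" "0 < t" "0 < ft" "0 \<le> f"
    unfolding s_def t_def ft_def f_def using region_bounds phi_tilde_pos phi_nonneg by auto
  have gap: "(\<beta> / s) * (ft * (r \<bullet> r) - 2 * f * (r \<bullet> w) + fh * (w \<bullet> w)) + \<sigma> * Hd
      \<le> \<sigma> * Mn (xt j - x (j - 1)) (ystep j) (\<gamma>t j - \<gamma> (j - 1)) - Mn (xt j - x j) 0 (\<gamma>t j - \<gamma> j)"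
    using step_decrease[of j \<sigma>] j \<sigma>h_le_\<sigma>
    unfolding phi_form_def r_def w_def Hd_def s_def ft_def f_def fh_def by simp
  have mono: "0 \<le> \<beta> * (- t * (r \<bullet> w) + (t - 1) * (w \<bullet> w) + (1 - \<theta>) * (r' \<bullet> w)) - Hd + Hx"
    using consecutive_y_monotone[OF j] unfolding r_def r'_def w_def Hd_def Hx_def t_def by simp
  have Hsq: "0 \<le> Hd - 2 * Hx + Hd'"
    using qnorm2_H_nonneg[of "ystep j - ystep (j - 1)"]
    unfolding qnorm2_diff[OF H_symmetric] Hd_def Hd'_def Hx_def .
  have sq: "0 \<le> ft\<^sup>2 * (r' \<bullet> r') - 2 * ft * c * (r' \<bullet> w) + c\<^sup>2 * (w \<bullet> w)"
    using inner_ge_zero[of "ft *\<^sub>R r' - c *\<^sub>R w"]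
    by (simp add: inner_diff_left inner_diff_right inner_commute power2_eq_square algebra_simps)
  have eta: "eta j = ft / (s * \<beta>) * (\<beta>\<^sup>2 * (r \<bullet> r)) + f / (s * t) * Hd"
    "eta (j - 1) = ft / (s * \<beta>) * (\<beta>\<^sup>2 * (r' \<bullet> r')) + f / (s * t) * Hd'"
    using j unfolding eta_def r_def r'_def Hd_def Hd'_def s_def t_def ft_def f_def power2_norm_eq_inner
    by (simp_all add: power2_eq_square)
  have "s \<noteq> 0" "t \<noteq> 0" "\<beta> \<noteq> 0" "ft \<noteq> 0"
    using pos \<beta>_pos by auto
  note certificate = descent_certificate[OF this c_def, where \<sigma> = \<sigma> and fh = fh
      and Hd = Hd and Hd' = Hd' and Hx = Hx and R = "r \<bullet> r" and RW = "r \<bullet> w" and W = "w \<bullet> w"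
      and R' = "r' \<bullet> r'" and PW = "r' \<bullet> w"]
  have "0 \<le> (\<beta> / (s * t\<^sup>2 * ft)) * (((t * fh - 2 * (t - 1) * f) * t * ft - (1 - \<theta>)\<^sup>2 * f\<^sup>2) * (w \<bullet> w))
      + \<sigma> * Hd"
    using phi_bar_nonneg pos \<beta>_pos \<sigma>_nonneg qnorm2_H_nonneg
    unfolding phi_bar_def t_def ft_def f_def fh_def Hd_def
    by (intro add_nonneg_nonneg mult_nonneg_nonneg divide_nonneg_pos) auto
  moreover have "0 \<le> (2 * f / (s * t)) * (\<beta> * (- t * (r \<bullet> w) + (t - 1) * (w \<bullet> w) + (1 - \<theta>) * (r' \<bullet> w)) - Hd + Hx)"
    "0 \<le> (f / (s * t)) * (Hd - 2 * Hx + Hd')"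
    "0 \<le> (\<beta> / (s * ft)) * (ft\<^sup>2 * (r' \<bullet> r') - 2 * ft * c * (r' \<bullet> w) + c\<^sup>2 * (w \<bullet> w))"
    using mono Hsq sq pos \<beta>_pos by simp_all
  ultimately show ?thesis
    using gap eta certificate by linarith
qed

lemma lyapunov_descent:
  assumes "j \<ge> 1"
  shows "Mn (xt j - x j) 0 (\<gamma>t j - \<gamma> j) + eta j
           \<le> \<sigma> * Mn (xt j - x (j - 1)) (ystep j) (\<gamma>t j - \<gamma> (j - 1)) + eta (j - 1)"
proof (cases "j = 1")
  case True
  then show ?thesis
    using descent_first by simp
next
  case False
  then show ?thesis
    using descent_later assms by simp
qed

end

theorem theorem2p9:
  fixes f :: "real^'n \<Rightarrow> ereal" and g :: "real^'p \<Rightarrow> ereal"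
    and A :: "real^'n^'m" and B :: "real^'p^'m" and b :: "real^'m"
    and G :: "real^'n^'n" and H :: "real^'p^'p"
    and \<beta> \<sigma>t \<sigma>h \<tau> \<theta> \<sigma> :: real
    and x :: "nat \<Rightarrow> real^'n" and y :: "nat \<Rightarrow> real^'p" and \<gamma> :: "nat \<Rightarrow> real^'m"
    and xt :: "nat \<Rightarrow> real^'n" and u :: "nat \<Rightarrow> real^'n" and \<gamma>t :: "nat \<Rightarrow> real^'m"
    and k :: nat
  assumes f_pcc: "proper_fun f" "convex_fun f" "closed_fun f"
    and g_pcc: "proper_fun g" "convex_fun g" "closed_fun g"
    and KKT_ne: "KKT_set f g A B b \<noteq> {}"
    and \<beta>_pos: "\<beta> > 0"
    and \<sigma>t: "0 \<le> \<sigma>t" "\<sigma>t < 1"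
    and \<sigma>h: "0 \<le> \<sigma>h" "\<sigma>h < 1"
    and G: "sym_pd G" and H: "sym_psd H"
    and region: "region_R \<sigma>t \<tau> \<theta>"
    and gt_def: "\<And>j. j \<ge> 1 \<Longrightarrow> \<gamma>t j = \<gamma> (j - 1) - \<beta> *\<^sub>R (A *v xt j + B *v y (j - 1) - b)"
    and u_sub: "\<And>j. j \<ge> 1 \<Longrightarrow> u j + transpose A *v \<gamma>t j \<in> subdiff f (xt j)"
    and x_err: "\<And>j. j \<ge> 1 \<Longrightarrow>
        qnorm2 G (xt j - x (j - 1) + matrix_inv G *v u j)
          \<le> (\<sigma>t / \<beta>) * (norm (\<gamma>t j - \<gamma> (j - 1)))\<^sup>2 + \<sigma>h * qnorm2 G (xt j - x (j - 1))"
    and y_opt: "\<And>j w. j \<ge> 1 \<Longrightarrow>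
        g (y j) + ereal (- ((\<gamma> (j - 1) - (\<tau> * \<beta>) *\<^sub>R (A *v xt j + B *v y (j - 1) - b)) \<bullet> (B *v y j))
                         + \<beta> / 2 * (norm (A *v xt j + B *v y j - b))\<^sup>2
                         + 1 / 2 * qnorm2 H (y j - y (j - 1)))
        \<le> g w + ereal (- ((\<gamma> (j - 1) - (\<tau> * \<beta>) *\<^sub>R (A *v xt j + B *v y (j - 1) - b)) \<bullet> (B *v w))
                         + \<beta> / 2 * (norm (A *v xt j + B *v w - b))\<^sup>2
                         + 1 / 2 * qnorm2 H (w - y (j - 1)))"
    and x_upd: "\<And>j. j \<ge> 1 \<Longrightarrow> x j = x (j - 1) - matrix_inv G *v u j"
    and g_upd: "\<And>j. j \<ge> 1 \<Longrightarrow>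
        \<gamma> j = (\<gamma> (j - 1) - (\<tau> * \<beta>) *\<^sub>R (A *v xt j + B *v y (j - 1) - b))
              - (\<theta> * \<beta>) *\<^sub>R (A *v xt j + B *v y j - b)"
    and \<sigma>: "\<sigma>h \<le> \<sigma>" "\<sigma> < 1"
    and \<sigma>_phi: "phi \<sigma>t \<tau> \<theta> \<sigma> \<ge> 0" "phi_hat \<sigma>t \<tau> \<theta> \<sigma> \<ge> 0"
       "phi_tilde \<sigma>t \<tau> \<theta> \<sigma> > 0" "phi_bar \<sigma>t \<tau> \<theta> \<sigma> \<ge> 0"
    and k: "k \<ge> 1"
  shows
    "let q = (\<lambda>j. - \<beta> *\<^sub>R (A *v xt j + B *v y j - b));
         \<eta> = (\<lambda>j. if j = 0 then
                   4 * (1 + \<tau> + vartheta \<sigma>t \<tau> \<theta>) * phi \<sigma>t \<tau> \<theta> \<sigma>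
                     / ((\<tau> + \<theta>) * (1 + \<tau>) * vartheta \<sigma>t \<tau> \<theta>)
                     * d0 f g A B b G H \<beta> \<tau> \<theta> (x 0) (y 0) (\<gamma> 0)
                 else phi_tilde \<sigma>t \<tau> \<theta> \<sigma> / ((\<tau> + \<theta>) * \<beta>) * (norm (q j))\<^sup>2
                   + phi \<sigma>t \<tau> \<theta> \<sigma> / ((\<tau> + \<theta>) * (1 + \<tau>)) * qnorm2 H (y j - y (j - 1)))
     in Mnorm2 G H B \<beta> \<tau> \<theta> (xt k - x k) 0 (\<gamma>t k - \<gamma> k) + \<eta> k
        \<le> \<sigma> * Mnorm2 G H B \<beta> \<tau> \<theta> (xt k - x (k - 1)) (y k - y (k - 1)) (\<gamma>t k - \<gamma> (k - 1)) + \<eta> (k - 1)"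
proof -
  interpret inexact_sym_prox_admm_sigma f g A B b G H \<beta> \<sigma>t \<sigma>h \<tau> \<theta> x y \<gamma> xt u \<gamma>t \<sigma>
    using f_pcc(1) g_pcc(1,2) KKT_ne \<beta>_pos \<sigma>t \<sigma>h G H region gt_def u_sub x_err y_opt x_upd g_upd
      \<sigma>(1) \<sigma>_phi
    by unfold_locales auto
  show ?thesis
    using lyapunov_descent[OF k] unfolding Let_def eta_def resid_def ystep_def .
qed

end
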